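(* Let $n\ge3$, let the sites of an $n$-qubit chain be partitioned as $L=\{1,\dots,a\}$, $C=\{a+1\}$, $R=\{a+2,\dots,n\}$ with $L,R$ nonempty, and let $W\in\mathrm{Sp}(2n,\mathbb{Z}_2)$ be the symplectic matrix of a Clifford unitary that is an irreducible $1$-wall around $C$. Then $G_{\mathrm{left}}=G_{\mathrm{right}}$, and this subspace has dimension $1$; i.e. it corresponds to the group $\{\mathbb{1},\sigma\}$ generated by a single traceless single-qubit Pauli matrix $\sigma$ on site $a+1$.
   Context: Pauli operators modulo phases are identified with $\mathbb{Z}_2^{2n}$ via $(p_1,q_1,\dots,p_n,q_n)\mapsto X^{p_1}Z^{q_1}\otimes\cdots\otimes X^{p_n}Z^{q_n}$; symplectic form $J=\bigoplus_{i=1}^n\begin{pmatrix}0&1\\1&0\end{pmatrix}$; $\mathrm{Sp}(2n,\mathbb{Z}_2)=\{S:SJS^T=J\}$. $V_S$ denotes vectors supported on the site set $S$, $\mathbb{Z}_2^{2n}=V_L\oplus V_C\oplus V_R$, vectors $(l,c,r)$, $\pi_C$ the projection onto $V_C$. Left wall condition around $C$: for all $t\ge1$, $l\in V_L$: $W^t(l,0,0)\in V_L\oplus V_C\oplus\{0\}$. $W$ is an irreducible $1$-wall around $C$ if it satisfies the left wall condition around $C$ and contains no smaller wall, i.e. neither $W^t V_L\subseteq V_L$ for all $t\ge1$ nor $W^t(V_L\oplus V_C)\subseteq V_L\oplus V_C$ for all $t\ge1$. Internal subspaces: $G_{\mathrm{left}}=\pi_C(\mathrm{span}\{W^t(l,0,0):t\ge0,l\in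 V_L\})$, $G_{\mathrm{right}}=\pi_C(\mathrm{span}\{W^t(0,0,r):t\ge0,r\in V_R\})$. *)

theory Defs
  imports "HOL.Vector_Spaces" "HOL-Library.Z2" "HOL-Library.Function_Algebras"
begin

text \<open>Phase-space vectors of n qubits: Z_2^{2n}, represented as functions
  nat => bit that vanish outside the index range 0..<2n.  Coordinate 2(i-1)
  is the X-exponent p_i and coordinate 2(i-1)+1 the Z-exponent q_i of site i
  (sites are numbered 1..n).  Matrices are nat => nat => bit, entries with an
  index outside 0..<2n are irrelevant (and required to be 0 for Sp).\<close>

type_synonym pvec = "nat \<Rightarrow> bit"
type_synonym pmat = "nat \<Rightarrow> nat \<Rightarrow> bit"

definition site :: "nat \<Rightarrow> nat" where
  "site k = k div 2 + 1"

definition scaleZ2 :: "bit \<Rightarrow> pvec \<Rightarrow> pvec" where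
  "scaleZ2 c v = (\<lambda>k. c * v k)"

definition mat_vec :: "nat \<Rightarrow> pmat \<Rightarrow> pvec \<Rightarrow> pvec" where
  "mat_vec n W v = (\<lambda>i. if i < 2*n then (\<Sum>j<2*n. W i j * v j) else 0)"

definition mat_pow_vec :: "nat \<Rightarrow> pmat \<Rightarrow> nat \<Rightarrow> pvec \<Rightarrow> pvec" where
  "mat_pow_vec n W t = (mat_vec n W ^^ t)"

text \<open>The symplectic form J = direct sum of n copies of [[0,1],[1,0]].\<close>
definition Jform :: "nat \<Rightarrow> pmat" where
  "Jform n = (\<lambda>i j. if i < 2*n \<and> j < 2*n \<and> i div 2 = j div 2 \<and> i \<noteq> j then 1 else 0)"

definition symplectic :: "nat \<Rightarrow> pmat \<Rightarrow> bool" where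
  "symplectic n S \<longleftrightarrow>
     (\<forall>i j. \<not> (i < 2*n \<and> j < 2*n) \<longrightarrow> S i j = 0) \<and>
     (\<forall>i<2*n. \<forall>j<2*n.
        (\<Sum>k<2*n. \<Sum>l<2*n. S i k * Jform n k l * S j l) = Jform n i j)"

definition Vsites :: "nat \<Rightarrow> nat set \<Rightarrow> pvec set" where
  "Vsites n S = {v. \<forall>k. (k < 2*n \<and> site k \<in> S) \<or> v k = 0}"

definition proj_sites :: "nat \<Rightarrow> nat set \<Rightarrow> pvec \<Rightarrow> pvec" where
  "proj_sites n S v = (\<lambda>k. if k < 2*n \<and> site k \<in> S then v k else 0)"

definition left_wall :: "nat \<Rightarrow> pmat \<Rightarrow> nat set \<Rightarrow> nat set \<Rightarrow> bool" where
  "left_wall n W L C \<longleftrightarrow>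
     (\<forall>t\<ge>1. \<forall>l\<in>Vsites n L. mat_pow_vec n W t l \<in> Vsites n (L \<union> C))"

definition irreducible_1_wall :: "nat \<Rightarrow> pmat \<Rightarrow> nat set \<Rightarrow> nat set \<Rightarrow> bool" where
  "irreducible_1_wall n W L C \<longleftrightarrow>
     left_wall n W L C \<and>
     \<not> (\<forall>t\<ge>1. mat_pow_vec n W t ` Vsites n L \<subseteq> Vsites n L) \<and>
     \<not> (\<forall>t\<ge>1. mat_pow_vec n W t ` Vsites n (L \<union> C) \<subseteq> Vsites n (L \<union> C))"

definition G_internal :: "nat \<Rightarrow> pmat \<Rightarrow> nat set \<Rightarrow> nat set \<Rightarrow> pvec set" where
  "G_internal n W S C =
     proj_sites n C ` module.span scaleZ2
        {mat_pow_vec n W t v | t v. v \<in> Vsites n S}"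

end

(* Let A be the span of the W-orbit of V_L.  It is W-invariant, contains V_L and, by the wall
   condition, lies in V_L + V_C; hence G_left = A \<inter> V_C.  Irreducibility excludes
   G_left = 0 (then A = V_L) and G_left = V_C (then A = V_L + V_C), so G_left = {0, g} with g \<noteq> 0.
   Since W is symplectic, the symplectic complement of the invariant space A is invariant; it
   contains V_R, hence also the orbit span B of V_R.  So every element of G_right commutes with g,
   which on a single site leaves only 0 and g.  Finally G_right \<noteq> 0: otherwise B = V_R would be
   invariant, and then so would its complement V_L + V_C. *)

theory Submission
  imports Defs
begin

text \<open>By default the simplifier turns \<open>+\<close> and \<open>*\<close> on \<open>bit\<close> into \<open>xor\<close> and \<open>and\<close>,
  which defeats ring normalisation.\<close>

declare add_bit_eq_xor [simp del] mult_bit_eq_and [simp del]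

interpretation Z2: vector_space scaleZ2
  by unfold_locales (auto simp: scaleZ2_def fun_eq_iff algebra_simps)

lemma scaleZ2_eq_if: "scaleZ2 c v = (if c = 0 then 0 else v)"
  by (cases c) (auto simp: scaleZ2_def fun_eq_iff)

lemma UNIV_bit: "(UNIV :: bit set) = {0, 1}"
  using bit_not_zero_iff by blast

lemma Z2_subspaceI:
  assumes "0 \<in> X" and "\<And>x y. x \<in> X \<Longrightarrow> y \<in> X \<Longrightarrow> x + y \<in> X"
  shows "Z2.subspace X"
  using assms by (auto simp: Z2.subspace_def scaleZ2_eq_if)

lemma dim_pair: "g \<noteq> 0 \<Longrightarrow> Z2.dim {0, g} = 1"
  by (rule Z2.dim_unique[of "{g}"])
    (auto intro: Z2.span_zero Z2.span_base Z2.independent_insertI)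

lemma mat_vec_add: "mat_vec n W (x + y) = mat_vec n W x + mat_vec n W y"
  by (simp add: mat_vec_def fun_eq_iff sum.distrib distrib_left)

lemma mat_vec_zero [simp]: "mat_vec n W 0 = 0"
  by (simp add: mat_vec_def fun_eq_iff)

lemma mat_pow_vec_0 [simp]: "mat_pow_vec n W 0 v = v"
  by (simp add: mat_pow_vec_def)

definition invariant_under :: "nat \<Rightarrow> pmat \<Rightarrow> pvec set \<Rightarrow> bool" where
  "invariant_under n W X \<longleftrightarrow> mat_vec n W ` X \<subseteq> X"

lemma invariant_under_mat_pow_vec:
  assumes "invariant_under n W X"
  shows "mat_pow_vec n W t ` X \<subseteq> X"
proof -
  have "mat_pow_vec n W t x \<in> X" if "x \<in> X" for x
    using that assms by (induction t) (auto simp: mat_pow_vec_def invariant_under_def)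
  then show ?thesis by blast
qed

lemma irreducible_1_wallD:
  assumes "irreducible_1_wall n W L C"
  shows "left_wall n W L C" and "\<not> invariant_under n W (Vsites n L)"
    and "\<not> invariant_under n W (Vsites n (L \<union> C))"
  using assms invariant_under_mat_pow_vec unfolding irreducible_1_wall_def by blast+

definition phase_space :: "nat \<Rightarrow> pvec set" where
  "phase_space n = {v. \<forall>k\<ge>2*n. v k = 0}"

lemma finite_phase_space: "finite (phase_space n)"
proof -
  let ?vec = "\<lambda>xs k. if k < 2*n then xs ! k else (0::bit)"
  have "phase_space n \<subseteq> ?vec ` {xs. set xs \<subseteq> UNIV \<and> length xs = 2*n}"
  proof
    fix v assume "v \<in> phase_space n"
    then have "v = ?vec (map v [0..<2*n])"
      by (auto simp: phase_space_def fun_eq_iff)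
    then show "v \<in> ?vec ` {xs. set xs \<subseteq> UNIV \<and> length xs = 2*n}" by force
  qed
  moreover have "finite {xs. set xs \<subseteq> (UNIV :: bit set) \<and> length xs = 2*n}"
    by (rule finite_lists_length_eq) (simp add: UNIV_bit)
  ultimately show ?thesis by (rule finite_surj[rotated])
qed

lemma mat_vec_in_phase_space: "mat_vec n W v \<in> phase_space n"
  by (simp add: mat_vec_def phase_space_def)

lemma Vsites_subset_phase_space: "Vsites n S \<subseteq> phase_space n"
  unfolding Vsites_def phase_space_def using not_less by blast

lemma subspace_phase_space: "Z2.subspace (phase_space n)"
  by (rule Z2_subspaceI) (simp_all add: phase_space_def)

lemma subspace_Vsites: "Z2.subspace (Vsites n S)"
  by (rule Z2_subspaceI) (simp_all add: Vsites_def, metis add_0)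

lemma site_le: "k < 2*n \<Longrightarrow> 1 \<le> site k \<and> site k \<le> n"
  by (simp add: site_def)

lemma Vsites_subset_Vsites:
  assumes "S \<inter> {1..n} \<subseteq> T"
  shows "Vsites n S \<subseteq> Vsites n T"
proof
  fix v assume v: "v \<in> Vsites n S"
  have "k < 2*n \<and> site k \<in> T" if "v k \<noteq> 0" for k
  proof -
    from v that have "k < 2*n" and "site k \<in> S" unfolding Vsites_def by blast+
    then show ?thesis using site_le[of k n] assms by auto
  qed
  then show "v \<in> Vsites n T" unfolding Vsites_def by blast
qed

lemma proj_sites_in_Vsites: "proj_sites n S x \<in> Vsites n S"
  by (simp add: proj_sites_def Vsites_def)

lemma proj_sites_zero [simp]: "proj_sites n S 0 = 0"
  by (simp add: proj_sites_def fun_eq_iff)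

lemma proj_sites_id: "x \<in> Vsites n S \<Longrightarrow> proj_sites n S x = x"
  by (auto simp: proj_sites_def Vsites_def fun_eq_iff)

lemma Vsites_Un_split:
  "x \<in> Vsites n (S \<union> T) \<Longrightarrow> S \<inter> T = {} \<Longrightarrow> x = proj_sites n S x + proj_sites n T x"
  by (auto simp: proj_sites_def Vsites_def fun_eq_iff)

lemma proj_sites_eq_0_imp_Vsites_diff:
  assumes x: "x \<in> Vsites n S" and proj: "proj_sites n T x = 0"
  shows "x \<in> Vsites n (S - T)"
proof -
  have "k < 2*n \<and> site k \<in> S - T" if "x k \<noteq> 0" for k
  proof -
    from x that have "k < 2*n" and "site k \<in> S" unfolding Vsites_def by blast+
    moreover have "site k \<notin> T"
      using fun_cong[OF proj, of k] that \<open>k < 2*n\<close> by (auto simp: proj_sites_def)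
    ultimately show ?thesis by blast
  qed
  then show ?thesis unfolding Vsites_def by blast
qed

subsection \<open>The symplectic form\<close>

definition partner :: "nat \<Rightarrow> nat" where
  "partner k = (if even k then Suc k else k - 1)"

lemma partner_partner [simp]: "partner (partner k) = k"
  unfolding partner_def by presburger

lemma partner_less: "k < 2*n \<Longrightarrow> partner k < 2*n"
  unfolding partner_def by presburger

lemma site_partner [simp]: "site (partner k) = site k"
  unfolding partner_def site_def by presburger

lemma bij_betw_partner: "bij_betw partner {..<2*n} {..<2*n}"
  by (rule bij_betw_byWitness[of _ partner]) (auto simp: partner_less)

lemma same_site_iff_partner: "i div 2 = j div 2 \<and> i \<noteq> j \<longleftrightarrow> j = partner i"
proof -
  have div2: "(j::nat) div 2 = q \<longleftrightarrow> j = 2*q \<or> j = 2*q + 1" for j q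
    by presburger
  show ?thesis
  proof (cases "even i")
    case True
    then obtain q where "i = 2*q" by blast
    then show ?thesis using div2[of j q] by (auto simp: partner_def)
  next
    case False
    then obtain q where "i = 2*q + 1" using oddE by blast
    then show ?thesis using div2[of j q] by (auto simp: partner_def)
  qed
qed

lemma Jform_eq_partner:
  "i < 2*n \<Longrightarrow> j < 2*n \<Longrightarrow> Jform n i j = (if j = partner i then 1 else 0)"
  by (simp add: Jform_def same_site_iff_partner)

lemma partner_eq_iff [simp]: "partner i = partner j \<longleftrightarrow> i = j"
  using partner_partner by metis

text \<open>\<open>sform n x y\<close> is \<open>x\<^sup>T J y\<close>; it vanishes iff the Pauli operators of \<open>x\<close> and \<open>y\<close> commute.\<close>

definition sform :: "nat \<Rightarrow> pvec \<Rightarrow> pvec \<Rightarrow> bit" where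
  "sform n x y = (\<Sum>k<2*n. x k * y (partner k))"

lemma sform_add_left: "sform n (x + y) z = sform n x z + sform n y z"
  by (simp add: sform_def sum.distrib distrib_right)

lemma sform_zero_left [simp]: "sform n 0 y = 0"
  by (simp add: sform_def)

definition unit_vec :: "nat \<Rightarrow> pvec" where
  "unit_vec m = (\<lambda>k. if k = m then 1 else 0)"

lemma unit_vec_in_Vsites: "m < 2*n \<Longrightarrow> site m \<in> S \<Longrightarrow> unit_vec m \<in> Vsites n S"
  by (simp add: Vsites_def unit_vec_def)

lemma sform_unit_vec: "m < 2*n \<Longrightarrow> sform n x (unit_vec m) = x (partner m)"
proof -
  assume m: "m < 2*n"
  have "sform n x (unit_vec m) = (\<Sum>k<2*n. if k = partner m then x k else 0)"
    unfolding sform_def unit_vec_def by (rule sum.cong) auto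
  then show ?thesis using partner_less[OF m] by simp
qed

lemma sform_proj_sites:
  assumes "y \<in> Vsites n S"
  shows "sform n (proj_sites n S x) y = sform n x y"
  unfolding sform_def
proof (rule sum.cong)
  fix k assume k: "k \<in> {..<2*n}"
  show "proj_sites n S x k * y (partner k) = x k * y (partner k)"
  proof (cases "y (partner k) = 0")
    case False
    then have "site (partner k) \<in> S" using assms unfolding Vsites_def by blast
    with k show ?thesis by (simp add: proj_sites_def)
  qed simp
qed simp

lemma symplectic_rows:
  assumes S: "symplectic n W" and i: "i < 2*n" and j: "j < 2*n"
  shows "(\<Sum>k<2*n. W i k * W j (partner k)) = (if j = partner i then 1 else 0)"
proof -
  have "W i k * W j (partner k) = (\<Sum>l<2*n. W i k * Jform n k l * W j l)" if "k < 2*n" for k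
  proof -
    have "(\<Sum>l<2*n. W i k * Jform n k l * W j l)
        = (\<Sum>l<2*n. if l = partner k then W i k * W j l else 0)"
      by (rule sum.cong) (use that in \<open>auto simp: Jform_eq_partner\<close>)
    then show ?thesis using partner_less[OF that] by simp
  qed
  then have "(\<Sum>k<2*n. W i k * W j (partner k))
      = (\<Sum>k<2*n. \<Sum>l<2*n. W i k * Jform n k l * W j l)"
    by (intro sum.cong) auto
  also have "\<dots> = Jform n i j" using S i j by (simp add: symplectic_def)
  finally show ?thesis using i j by (simp add: Jform_eq_partner)
qed

text \<open>\<open>J W\<^sup>T J\<close>: the adjoint of \<open>W\<close> with respect to \<open>sform\<close>.\<close>

definition sadjoint :: "pmat \<Rightarrow> pmat" where
  "sadjoint W i j = W (partner j) (partner i)"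

lemma sform_mat_vec_adjoint: "sform n (mat_vec n W x) y = sform n x (mat_vec n (sadjoint W) y)"
proof -
  have reindex: "(\<Sum>k<2*n. W k j * y (partner k)) = (\<Sum>m<2*n. W (partner m) j * y m)" for j
    using sum.reindex_bij_betw[OF bij_betw_partner[of n], of "\<lambda>m. W (partner m) j * y m"]
    by simp
  have "sform n (mat_vec n W x) y = (\<Sum>k<2*n. \<Sum>j<2*n. x j * (W k j * y (partner k)))"
    by (simp add: sform_def mat_vec_def sum_distrib_left sum_distrib_right mult_ac)
  also have "\<dots> = (\<Sum>j<2*n. x j * (\<Sum>k<2*n. W k j * y (partner k)))"
    by (subst sum.swap) (simp add: sum_distrib_left)
  also have "\<dots> = sform n x (mat_vec n (sadjoint W) y)"
    by (simp add: reindex sform_def mat_vec_def sadjoint_def partner_less)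
  finally show ?thesis .
qed

lemma symplectic_sadjoint_right_inverse:
  assumes S: "symplectic n W" and v: "v \<in> phase_space n"
  shows "mat_vec n W (mat_vec n (sadjoint W) v) = v"
proof
  fix i
  show "mat_vec n W (mat_vec n (sadjoint W) v) i = v i"
  proof (cases "i < 2*n")
    case False
    then show ?thesis using v by (simp add: mat_vec_def phase_space_def)
  next
    case i: True
    have "mat_vec n W (mat_vec n (sadjoint W) v) i
        = (\<Sum>m<2*n. (\<Sum>j<2*n. W i j * W (partner m) (partner j)) * v m)"
      using i by (simp add: mat_vec_def sadjoint_def sum_distrib_left sum_distrib_right mult_ac)
        (rule sum.swap)
    also have "\<dots> = (\<Sum>m<2*n. if m = i then v m else 0)"
      by (rule sum.cong) (use i in \<open>auto simp: symplectic_rows[OF S] partner_less\<close>)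
    finally show ?thesis using i by simp
  qed
qed

lemma symplectic_inj_on: "symplectic n W \<Longrightarrow> inj_on (mat_vec n W) (phase_space n)"
proof -
  assume S: "symplectic n W"
  have "phase_space n \<subseteq> mat_vec n W ` phase_space n"
    using symplectic_sadjoint_right_inverse[OF S] mat_vec_in_phase_space by (metis image_eqI subsetI)
  then have "mat_vec n W ` phase_space n = phase_space n"
    using mat_vec_in_phase_space by blast
  then show ?thesis by (simp add: eq_card_imp_inj_on finite_phase_space)
qed

lemma symplectic_sform_preserved:
  assumes S: "symplectic n W" and y: "y \<in> phase_space n"
  shows "sform n (mat_vec n W x) (mat_vec n W y) = sform n x y"
proof -
  have "mat_vec n (sadjoint W) (mat_vec n W y) = y"
    using symplectic_sadjoint_right_inverse[OF S mat_vec_in_phase_space] y mat_vec_in_phase_space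
    by (blast intro: inj_onD[OF symplectic_inj_on[OF S]])
  then show ?thesis by (simp add: sform_mat_vec_adjoint)
qed

subsection \<open>A single site\<close>

lemma site_eq_Suc_iff: "site k = a + 1 \<longleftrightarrow> k = 2*a \<or> k = 2*a + 1"
  unfolding site_def by presburger

lemma sform_single_site:
  assumes a: "a < n" and x: "x \<in> Vsites n {a+1}" and y: "y \<in> Vsites n {a+1}"
  shows "sform n x y = x (2*a) * y (2*a+1) + x (2*a+1) * y (2*a)"
proof -
  have "x k * y (partner k)
      = (if k = 2*a then x (2*a) * y (2*a+1) else 0)
        + (if k = 2*a+1 then x (2*a+1) * y (2*a) else 0)" for k
  proof (cases "k = 2*a \<or> k = 2*a + 1")
    case True
    then show ?thesis by (auto simp: partner_def)
  next
    case False
    then have "x k = 0" using x site_eq_Suc_iff[of k a] unfolding Vsites_def by blast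
    with False show ?thesis by simp
  qed
  then show ?thesis using a by (simp add: sform_def sum.distrib)
qed

lemma single_site_expand:
  assumes a: "a < n" and x: "x \<in> Vsites n {a+1}"
    and g: "g \<in> Vsites n {a+1}" and h: "h \<in> Vsites n {a+1}" and gh: "sform n g h = 1"
  shows "x = scaleZ2 (sform n x h) g + scaleZ2 (sform n x g) h"
proof
  fix k
  have det: "g (2*a) * h (2*a+1) + g (2*a+1) * h (2*a) = 1"
    using gh by (simp add: sform_single_site[OF a g h])
  show "x k = (scaleZ2 (sform n x h) g + scaleZ2 (sform n x g) h) k"
  proof (cases "k = 2*a \<or> k = 2*a + 1")
    case True
    have "(x0 * h1 + x1 * h0) * g0 + (x0 * g1 + x1 * g0) * h0 = x0 * (g0 * h1 + g1 * h0)"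
      and "(x0 * h1 + x1 * h0) * g1 + (x0 * g1 + x1 * g0) * h1 = x1 * (g0 * h1 + g1 * h0)"
      for x0 x1 g0 g1 h0 h1 :: bit
      \<comment> \<open>the cross terms cancel in characteristic 2\<close>
      by (simp_all add: algebra_simps)
    with True det show ?thesis
      by (auto simp: scaleZ2_def sform_single_site[OF a x g] sform_single_site[OF a x h])
  next
    case False
    then have "x k = 0" "g k = 0" "h k = 0"
      using x g h site_eq_Suc_iff[of k a] unfolding Vsites_def by blast+
    then show ?thesis by (simp add: scaleZ2_def)
  qed
qed

lemma single_site_obtain_partner:
  assumes "g \<in> Vsites n {a+1}" and "g \<noteq> 0"
  obtains h where "h \<in> Vsites n {a+1}" and "sform n g h = 1"
proof -
  obtain k where gk: "g k \<noteq> 0" using \<open>g \<noteq> 0\<close> by (metis ext zero_fun_apply)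
  then have k: "k < 2*n" "site k = a + 1" using assms(1) unfolding Vsites_def by blast+
  show thesis
  proof
    show "unit_vec (partner k) \<in> Vsites n {a+1}" using k by (simp add: unit_vec_in_Vsites partner_less)
    show "sform n g (unit_vec (partner k)) = 1" using k gk by (simp add: sform_unit_vec partner_less)
  qed
qed

lemma single_site_sform_eq_0:
  assumes a: "a < n" and x: "x \<in> Vsites n {a+1}" and g: "g \<in> Vsites n {a+1}" "g \<noteq> 0"
    and xg: "sform n x g = 0"
  shows "x = 0 \<or> x = g"
proof -
  obtain h where h: "h \<in> Vsites n {a+1}" "sform n g h = 1"
    using single_site_obtain_partner[OF g] .
  have "x = scaleZ2 (sform n x h) g + scaleZ2 (sform n x g) h"
    by (rule single_site_expand[OF a x g(1) h])
  also have "\<dots> = scaleZ2 (sform n x h) g"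
    using xg by (simp add: scaleZ2_eq_if)
  finally show ?thesis by (simp add: scaleZ2_eq_if split: if_splits)
qed

lemma single_site_subspace_eq_pair:
  assumes a: "a < n" and U: "Z2.subspace U" "U \<subseteq> Vsites n {a+1}"
    and g: "g \<in> U" "g \<noteq> 0" and proper: "\<not> Vsites n {a+1} \<subseteq> U"
  shows "U = {0, g}"
proof
  show "{0, g} \<subseteq> U" using U(1) g(1) by (simp add: Z2.subspace_0)
  show "U \<subseteq> {0, g}"
  proof
    fix x assume x: "x \<in> U"
    show "x \<in> {0, g}"
    proof (cases "sform n x g = 0")
      case True
      then show ?thesis using single_site_sform_eq_0[OF a _ _ g(2)] x g(1) U(2) by blast
    next
      case False
      then have xg: "sform n x g = 1" by simp
      have "y \<in> U" if y: "y \<in> Vsites n {a+1}" for y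
      proof -
        have "y = scaleZ2 (sform n y g) x + scaleZ2 (sform n y x) g"
          using single_site_expand[OF a y _ _ xg] x g(1) U(2) by blast
        moreover have "scaleZ2 (sform n y g) x + scaleZ2 (sform n y x) g \<in> U"
          by (intro Z2.subspace_add[OF U(1)] Z2.subspace_scale[OF U(1)] x g(1))
        ultimately show ?thesis by (metis (no_types))
      qed
      with proper show ?thesis by blast
    qed
  qed
qed

subsection \<open>Symplectic complements\<close>

definition sperp :: "nat \<Rightarrow> pvec set \<Rightarrow> pvec set" where
  "sperp n X = {x \<in> phase_space n. \<forall>y\<in>X. sform n x y = 0}"

lemma subspace_sperp: "Z2.subspace (sperp n X)"
  by (rule Z2_subspaceI)
    (auto simp: sperp_def phase_space_def sform_add_left)

lemma sperp_antimono: "X \<subseteq> Y \<Longrightarrow> sperp n Y \<subseteq> sperp n X"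
  by (auto simp: sperp_def)

lemma sform_Vsites_disjoint:
  assumes x: "x \<in> Vsites n S" and y: "y \<in> Vsites n T" and "S \<inter> T = {}"
  shows "sform n x y = 0"
proof -
  have term0: "x k * y (partner k) = 0" for k
  proof (cases "x k = 0")
    case False
    then have "site k \<in> S" using x unfolding Vsites_def by blast
    then have "site (partner k) \<notin> T" using \<open>S \<inter> T = {}\<close> by auto
    then have "y (partner k) = 0" using y unfolding Vsites_def by blast
    then show ?thesis by simp
  qed simp
  show ?thesis unfolding sform_def by (rule sum.neutral) (use term0 in blast)
qed

lemma sperp_Vsites: "sperp n (Vsites n S) = Vsites n (- S)"
proof
  show "sperp n (Vsites n S) \<subseteq> Vsites n (- S)"
  proof
    fix x assume x: "x \<in> sperp n (Vsites n S)"
    have "k < 2*n \<and> site k \<in> - S" if xk: "x k \<noteq> 0" for k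
    proof
      show k: "k < 2*n"
      proof (rule ccontr)
        assume "\<not> k < 2*n"
        then have "x k = 0" using x by (simp add: sperp_def phase_space_def)
        with xk show False by simp
      qed
      show "site k \<in> - S"
      proof
        assume "site k \<in> S"
        then have "unit_vec (partner k) \<in> Vsites n S"
          using k by (simp add: unit_vec_in_Vsites partner_less)
        then have "sform n x (unit_vec (partner k)) = 0" using x by (simp add: sperp_def)
        with xk k show False by (simp add: sform_unit_vec partner_less)
      qed
    qed
    then show "x \<in> Vsites n (- S)" unfolding Vsites_def by blast
  qed
  show "Vsites n (- S) \<subseteq> sperp n (Vsites n S)"
    using sform_Vsites_disjoint[of _ n "- S" _ S] Vsites_subset_phase_space[of n "- S"]
    by (auto simp: sperp_def)
qed

lemma invariant_sperp:
  assumes S: "symplectic n W" and X: "X \<subseteq> phase_space n" and inv: "invariant_under n W X"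
  shows "invariant_under n W (sperp n X)"
proof -
  have "mat_vec n W ` X = X"
    using endo_inj_surj[OF finite_subset[OF X finite_phase_space] _
        inj_on_subset[OF symplectic_inj_on[OF S] X]] inv
    unfolding invariant_under_def by blast
  then have "sform n (mat_vec n W x) y = 0" if x: "x \<in> sperp n X" and y: "y \<in> X" for x y
  proof -
    obtain y' where "y' \<in> X" and "y = mat_vec n W y'" using y \<open>mat_vec n W ` X = X\<close> by blast
    then show ?thesis
      using x X symplectic_sform_preserved[OF S] by (auto simp: sperp_def)
  qed
  then show ?thesis by (auto simp: invariant_under_def sperp_def mat_vec_in_phase_space)
qed

definition orbit_span :: "nat \<Rightarrow> pmat \<Rightarrow> nat set \<Rightarrow> pvec set" where
  "orbit_span n W S = Z2.span {mat_pow_vec n W t v | t v. v \<in> Vsites n S}"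

lemma G_internal_eq_proj_orbit_span: "G_internal n W S C = proj_sites n C ` orbit_span n W S"
  by (simp add: G_internal_def orbit_span_def)

lemma subspace_orbit_span: "Z2.subspace (orbit_span n W S)"
  by (simp add: orbit_span_def Z2.subspace_span)

lemma Vsites_subset_orbit_span: "Vsites n S \<subseteq> orbit_span n W S"
proof
  fix v assume "v \<in> Vsites n S"
  then have "mat_pow_vec n W 0 v \<in> {mat_pow_vec n W t v | t v. v \<in> Vsites n S}" by blast
  then show "v \<in> orbit_span n W S" unfolding orbit_span_def by (simp add: Z2.span_base)
qed

lemma invariant_orbit_span: "invariant_under n W (orbit_span n W S)"
proof -
  have "mat_vec n W x \<in> orbit_span n W S" if "x \<in> orbit_span n W S" for x
    using that unfolding orbit_span_def
  proof (induction rule: Z2.span_induct)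
    case base
    show ?case
      by (rule Z2_subspaceI) (auto simp: mat_vec_add intro: Z2.span_zero Z2.span_add)
  next
    case (step x)
    then obtain t v where "x = mat_pow_vec n W t v" and "v \<in> Vsites n S" by blast
    then have "mat_vec n W x = mat_pow_vec n W (Suc t) v" by (simp add: mat_pow_vec_def)
    with \<open>v \<in> Vsites n S\<close> show ?case by (auto intro: Z2.span_base)
  qed
  then show ?thesis by (auto simp: invariant_under_def)
qed

lemma orbit_span_least:
  assumes "Z2.subspace X" and "invariant_under n W X" and "Vsites n S \<subseteq> X"
  shows "orbit_span n W S \<subseteq> X"
  unfolding orbit_span_def
proof (rule Z2.span_minimal[OF _ assms(1)])
  show "{mat_pow_vec n W t v | t v. v \<in> Vsites n S} \<subseteq> X"
    using assms(3) invariant_under_mat_pow_vec[OF assms(2)] by blast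
qed

lemma orbit_span_subset_phase_space: "orbit_span n W S \<subseteq> phase_space n"
  by (rule orbit_span_least)
    (auto simp: subspace_phase_space invariant_under_def mat_vec_in_phase_space
      Vsites_subset_phase_space)

lemma left_wall_orbit_span:
  assumes "left_wall n W L C"
  shows "orbit_span n W L \<subseteq> Vsites n (L \<union> C)"
  unfolding orbit_span_def
proof (rule Z2.span_minimal[OF _ subspace_Vsites], safe)
  fix t v assume v: "v \<in> Vsites n L"
  show "mat_pow_vec n W t v \<in> Vsites n (L \<union> C)"
  proof (cases t)
    case 0
    then show ?thesis using v Vsites_subset_Vsites[of L n "L \<union> C"] by auto
  next
    case (Suc s)
    then have "t \<ge> 1" by simp
    then show ?thesis using v assms unfolding left_wall_def by blast
  qed
qed

subsection \<open>The internal subspaces of an irreducible wall\<close>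

lemma left_wall_proj_sites_orbit_span:
  assumes wall: "left_wall n W L C" and LC: "L \<inter> C = {}" and y: "y \<in> orbit_span n W L"
  shows "proj_sites n C y \<in> orbit_span n W L"
proof -
  have "y = proj_sites n L y + proj_sites n C y"
    using Vsites_Un_split left_wall_orbit_span[OF wall] y LC by blast
  then have "proj_sites n C y = y - proj_sites n L y" by (metis add_diff_cancel_left')
  moreover have "proj_sites n L y \<in> orbit_span n W L"
    using Vsites_subset_orbit_span proj_sites_in_Vsites by blast
  ultimately show ?thesis using y Z2.subspace_diff[OF subspace_orbit_span] by simp
qed

lemma left_internal_eq_Int:
  assumes "left_wall n W L C" and "L \<inter> C = {}"
  shows "G_internal n W L C = orbit_span n W L \<inter> Vsites n C"
proof
  show "G_internal n W L C \<subseteq> orbit_span n W L \<inter> Vsites n C"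
    using left_wall_proj_sites_orbit_span[OF assms] proj_sites_in_Vsites
    by (auto simp: G_internal_eq_proj_orbit_span)
  show "orbit_span n W L \<inter> Vsites n C \<subseteq> G_internal n W L C"
  proof
    fix x assume x: "x \<in> orbit_span n W L \<inter> Vsites n C"
    then have "x = proj_sites n C x" by (simp add: proj_sites_id)
    with x show "x \<in> G_internal n W L C"
      unfolding G_internal_eq_proj_orbit_span by blast
  qed
qed

lemma left_internal_nonzero:
  assumes wall: "left_wall n W L C" and LC: "L \<inter> C = {}"
    and nL: "\<not> invariant_under n W (Vsites n L)"
  obtains g where "g \<in> orbit_span n W L \<inter> Vsites n C" and "g \<noteq> 0"
proof (rule ccontr)
  let ?A = "orbit_span n W L"
  assume "\<not> thesis"
  with that have "proj_sites n C y = 0" if "y \<in> ?A" for y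
    using left_wall_proj_sites_orbit_span[OF wall LC that] proj_sites_in_Vsites by blast
  then have "?A \<subseteq> Vsites n ((L \<union> C) - C)"
    using left_wall_orbit_span[OF wall] proj_sites_eq_0_imp_Vsites_diff by blast
  also have "\<dots> \<subseteq> Vsites n L" by (rule Vsites_subset_Vsites) blast
  finally have "?A = Vsites n L" using Vsites_subset_orbit_span by blast
  then show False using nL invariant_orbit_span[of n W L] by simp
qed

lemma left_internal_proper:
  assumes wall: "left_wall n W L C" and LC: "L \<inter> C = {}"
    and nLC: "\<not> invariant_under n W (Vsites n (L \<union> C))"
  shows "\<not> Vsites n C \<subseteq> orbit_span n W L"
proof
  let ?A = "orbit_span n W L"
  assume C_sub: "Vsites n C \<subseteq> ?A"
  have "x \<in> ?A" if x: "x \<in> Vsites n (L \<union> C)" for x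
  proof -
    have "proj_sites n L x \<in> ?A" "proj_sites n C x \<in> ?A"
      using Vsites_subset_orbit_span C_sub proj_sites_in_Vsites by blast+
    then have "proj_sites n L x + proj_sites n C x \<in> ?A"
      by (rule Z2.subspace_add[OF subspace_orbit_span])
    then show ?thesis using Vsites_Un_split[OF x LC] by simp
  qed
  then have "?A = Vsites n (L \<union> C)" using left_wall_orbit_span[OF wall] by blast
  then show False using nLC invariant_orbit_span[of n W L] by simp
qed

lemma left_internal_pair:
  assumes a: "a < n" and L: "a + 1 \<notin> L" and wall: "left_wall n W L {a+1}"
    and nL: "\<not> invariant_under n W (Vsites n L)"
    and nLC: "\<not> invariant_under n W (Vsites n (L \<union> {a+1}))"
  obtains g where "g \<noteq> 0" and "orbit_span n W L \<inter> Vsites n {a+1} = {0, g}"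
proof -
  have LC: "L \<inter> {a+1} = {}" using L by blast
  obtain g where g: "g \<in> orbit_span n W L \<inter> Vsites n {a+1}" "g \<noteq> 0"
    using left_internal_nonzero[OF wall LC nL] by blast
  have "orbit_span n W L \<inter> Vsites n {a+1} = {0, g}"
    using left_internal_proper[OF wall LC nLC]
    by (intro single_site_subspace_eq_pair[OF a _ _ g]
        Z2.subspace_inter[OF subspace_orbit_span subspace_Vsites]) auto
  with g(2) show thesis by (rule that)
qed

lemma orbit_span_subset_sperp:
  assumes S: "symplectic n W" and wall: "left_wall n W L C" and R: "R \<inter> (L \<union> C) = {}"
  shows "orbit_span n W R \<subseteq> sperp n (orbit_span n W L)"
proof (rule orbit_span_least[OF subspace_sperp])
  show "invariant_under n W (sperp n (orbit_span n W L))"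
    by (rule invariant_sperp[OF S orbit_span_subset_phase_space invariant_orbit_span])
  have "Vsites n R \<subseteq> Vsites n (- (L \<union> C))"
    using R by (intro Vsites_subset_Vsites) blast
  also have "\<dots> = sperp n (Vsites n (L \<union> C))"
    by (rule sperp_Vsites[symmetric])
  also have "\<dots> \<subseteq> sperp n (orbit_span n W L)"
    by (rule sperp_antimono[OF left_wall_orbit_span[OF wall]])
  finally show "Vsites n R \<subseteq> sperp n (orbit_span n W L)" .
qed

lemma right_internal_nonzero:
  assumes S: "symplectic n W" and wall: "left_wall n W L C"
    and disj: "L \<inter> R = {}" "C \<inter> R = {}" and cover: "{1..n} \<subseteq> L \<union> C \<union> R"
    and nLC: "\<not> invariant_under n W (Vsites n (L \<union> C))"
  shows "\<exists>b \<in> orbit_span n W R. proj_sites n C b \<noteq> 0"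
proof (rule ccontr)
  let ?B = "orbit_span n W R"
  assume proj_0: "\<not> ?thesis"
  have "?B \<subseteq> sperp n (orbit_span n W L)"
    using orbit_span_subset_sperp[OF S wall] disj by blast
  also have "\<dots> \<subseteq> sperp n (Vsites n L)"
    by (rule sperp_antimono[OF Vsites_subset_orbit_span])
  finally have "?B \<subseteq> Vsites n (- L)" by (simp only: sperp_Vsites)
  then have "?B \<subseteq> Vsites n (- L - C)"
    using proj_0 proj_sites_eq_0_imp_Vsites_diff by blast
  also have "\<dots> \<subseteq> Vsites n R"
    using cover by (intro Vsites_subset_Vsites) auto
  finally have "?B = Vsites n R" using Vsites_subset_orbit_span by blast
  then have "invariant_under n W (sperp n (Vsites n R))"
    using invariant_sperp[OF S Vsites_subset_phase_space] invariant_orbit_span[of n W R] by simp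
  moreover have "sperp n (Vsites n R) = Vsites n (L \<union> C)"
    unfolding sperp_Vsites using cover disj by (intro equalityI Vsites_subset_Vsites) auto
  ultimately show False using nLC by simp
qed

lemma right_internal_pair:
  assumes S: "symplectic n W" and a: "a < n"
    and disj: "L \<inter> R = {}" "a + 1 \<notin> L" "a + 1 \<notin> R" and cover: "{1..n} \<subseteq> L \<union> {a+1} \<union> R"
    and wall: "left_wall n W L {a+1}"
    and nLC: "\<not> invariant_under n W (Vsites n (L \<union> {a+1}))"
    and g: "g \<in> orbit_span n W L" "g \<in> Vsites n {a+1}" "g \<noteq> 0"
  shows "G_internal n W R {a+1} = {0, g}"
proof -
  let ?B = "orbit_span n W R" and ?C = "{a+1}"
  have CR: "?C \<inter> R = {}" and RLC: "R \<inter> (L \<union> ?C) = {}" using disj by blast+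
  have proj_B: "proj_sites n ?C b \<in> {0, g}" if "b \<in> ?B" for b
  proof -
    have "b \<in> sperp n (orbit_span n W L)"
      using orbit_span_subset_sperp[OF S wall RLC] that by blast
    then have "sform n b g = 0" using g(1) by (simp add: sperp_def)
    then have "sform n (proj_sites n ?C b) g = 0" by (simp only: sform_proj_sites[OF g(2)])
    then show ?thesis using single_site_sform_eq_0[OF a proj_sites_in_Vsites g(2,3)] by blast
  qed
  obtain b where b: "b \<in> ?B" "proj_sites n ?C b \<noteq> 0"
    using right_internal_nonzero[OF S wall disj(1) CR cover nLC] by blast
  then have "g \<in> proj_sites n ?C ` ?B" using proj_B[OF b(1)] by blast
  moreover have "0 \<in> proj_sites n ?C ` ?B"
    using Z2.subspace_0[OF subspace_orbit_span] proj_sites_zero by (metis image_eqI)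
  ultimately show ?thesis using proj_B by (auto simp: G_internal_eq_proj_orbit_span)
qed

theorem lemma6:
  fixes n a :: nat and W :: pmat
  assumes "n \<ge> 3"
    and "1 \<le> a" and "a + 2 \<le> n"
    and "symplectic n W"
    and "irreducible_1_wall n W {1..a} {a+1}"
  shows "G_internal n W {1..a} {a+1} = G_internal n W {a+2..n} {a+1}
         \<and> vector_space.dim scaleZ2 (G_internal n W {1..a} {a+1}) = 1"
proof -
  define L R where "L = {1..a}" and "R = {a+2..n}"
  have a: "a < n" and disj: "L \<inter> R = {}" "a + 1 \<notin> L" "a + 1 \<notin> R"
    and cover: "{1..n} \<subseteq> L \<union> {a+1} \<union> R"
    using assms(3) by (auto simp: L_def R_def)
  have wall: "left_wall n W L {a+1}"
    and nL: "\<not> invariant_under n W (Vsites n L)"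
    and nLC: "\<not> invariant_under n W (Vsites n (L \<union> {a+1}))"
    using irreducible_1_wallD[OF assms(5)] by (simp_all add: L_def)
  obtain g where g: "g \<noteq> 0" and A_C: "orbit_span n W L \<inter> Vsites n {a+1} = {0, g}"
    using left_internal_pair[OF a disj(2) wall nL nLC] by blast
  have "G_internal n W L {a+1} = {0, g}"
    using left_internal_eq_Int[OF wall] disj(2) A_C by auto
  moreover have "G_internal n W R {a+1} = {0, g}"
    using right_internal_pair[OF assms(4) a disj cover wall nLC _ _ g] A_C by blast
  ultimately show ?thesis using dim_pair[OF g] by (simp add: L_def R_def)
qed

end
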